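(* For every integer $n\ge 1$ and every real $x$, $$W^{(1)}_{n}(x)=(-2)^{\frac{n(n-1)}{2}}\,\sin^{\frac{n(n+1)}{2}}(x)\,G(n+1)\,2n\cos(x).$$
   Context: For smooth functions $f_1,\dots,f_n$ of a real variable $x$, $\mathrm{Wr}\{f_1,\dots,f_n\}$ denotes the determinant of the $n\times n$ matrix with $(i,j)$ entry $f_j^{(i-1)}(x)$. Define $W^{(1)}_1(x):=\sin(2x)$ and, for $n\ge2$, $W^{(1)}_n(x):=\mathrm{Wr}\{\sin(x),\sin(2x),\dots,\sin((n-1)x),\sin((n+1)x)\}$. Here $G(n+1)=\prod_{j=0}^{n-1}j!$. *)

theory Defs
  imports "HOL-Analysis.Derivative" "Jordan_Normal_Form.Determinant"
begin

definition Wr :: "(real \<Rightarrow> real) list \<Rightarrow> real \<Rightarrow> real" where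
  "Wr fs x = det (mat (length fs) (length fs) (\<lambda>(i, j). (deriv ^^ i) (fs ! j) x))"

definition W1 :: "nat \<Rightarrow> real \<Rightarrow> real" where
  "W1 n x = (if n = 1 then sin (2 * x)
     else Wr (map (\<lambda>k. (\<lambda>t. sin (real k * t))) ([1..<n] @ [n + 1])) x)"

text \<open>Barnes G-function at n+1: G(n+1) = prod_{j=0}^{n-1} j!.\<close>
definition barnesG_succ :: "nat \<Rightarrow> real" where
  "barnesG_succ n = (\<Prod>j<n. fact j)"

end

theory Submission
  imports Defs "HOL-Computational_Algebra.Polynomial"
begin

(* With U the Chebyshev polynomials of the second kind, sin((d + 1) t) = sin t * U_d(cos t), and the
   functions in the Wronskian correspond to the degrees d = 0, ..., n - 2, n. The i-th derivative of
   sin t * p(cos t) is a combination of the p^(l)(cos t), l <= i, whose coefficients form a lower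
   triangular matrix with diagonal sin t (-sin t)^i. So the Wronskian matrix factors as A * E * C,
   with E the derivatives of the monomials x^d at cos x and C the coefficients of the U_d. As U_d has
   degree d, leading coefficient 2^d and only monomials of the parity of d, the exponent n - 1 never
   occurs, E and C are upper triangular, and the determinant is the product of the three diagonals. *)

inductive_set trig_polys :: "(real \<Rightarrow> real) set" where
  const: "(\<lambda>x. c) \<in> trig_polys"
| sin: "sin \<in> trig_polys"
| cos: "cos \<in> trig_polys"
| add: "f \<in> trig_polys \<Longrightarrow> g \<in> trig_polys \<Longrightarrow> (\<lambda>x. f x + g x) \<in> trig_polys"
| mult: "f \<in> trig_polys \<Longrightarrow> g \<in> trig_polys \<Longrightarrow> (\<lambda>x. f x * g x) \<in> trig_polys"

lemma trig_polys_diff: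
  assumes "f \<in> trig_polys" "g \<in> trig_polys"
  shows "(\<lambda>x. f x - g x) \<in> trig_polys"
proof -
  have "(\<lambda>x. f x + (\<lambda>x. - 1) x * g x) \<in> trig_polys"
    by (intro trig_polys.intros assms)
  then show ?thesis by simp
qed

lemma trig_polys_deriv:
  assumes "f \<in> trig_polys"
  shows "(\<forall>x. f field_differentiable at x) \<and> deriv f \<in> trig_polys"
  using assms
proof induction
  case (const c)
  show ?case by (simp add: trig_polys.const)
next
  case sin
  have "deriv sin = (cos :: real \<Rightarrow> real)"
    by (rule ext, rule DERIV_imp_deriv, rule DERIV_sin)
  then show ?case
    by (metis DERIV_sin field_differentiable_def trig_polys.cos)
next
  case cos
  have "deriv cos = (\<lambda>x::real. 0 - sin x)"
    by (rule ext, rule DERIV_imp_deriv) (auto intro!: derivative_eq_intros)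
  moreover have "(\<lambda>x. 0 - sin x) \<in> trig_polys"
    by (intro trig_polys_diff trig_polys.intros)
  ultimately show ?case
    by (metis DERIV_cos field_differentiable_def)
next
  case (add f g)
  then show ?case
    by (auto simp: fun_eq_iff intro: field_differentiable_add trig_polys.add)
next
  case (mult f g)
  then have "deriv (\<lambda>x. f x * g x) = (\<lambda>x. f x * deriv g x + deriv f x * g x)"
    by (simp add: fun_eq_iff)
  with mult show ?case
    by (auto intro: field_differentiable_mult trig_polys.intros)
qed

lemma DERIV_trig_polys: "f \<in> trig_polys \<Longrightarrow> DERIV f x :> deriv f x"
  using trig_polys_deriv DERIV_deriv_iff_field_differentiable by blast

fun chain_coeff :: "nat \<Rightarrow> nat \<Rightarrow> real \<Rightarrow> real" where
  "chain_coeff 0 l = (if l = 0 then sin else (\<lambda>x. 0))"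
| "chain_coeff (Suc i) l =
     (\<lambda>x. deriv (chain_coeff i l) x - (if l = 0 then 0 else chain_coeff i (l - 1) x * sin x))"

lemma chain_coeff_in_trig_polys: "chain_coeff i l \<in> trig_polys"
proof (induction i arbitrary: l)
  case 0
  show ?case by (auto intro: trig_polys.intros)
next
  case (Suc i)
  have "deriv (chain_coeff i l) \<in> trig_polys"
    using Suc trig_polys_deriv by blast
  then show ?case
    using Suc by (cases l) (auto intro!: trig_polys_diff trig_polys.intros)
qed

lemma chain_coeff_eq_0: "i < l \<Longrightarrow> chain_coeff i l = (\<lambda>x. 0)"
  by (induction i arbitrary: l) auto

lemma chain_coeff_diag: "chain_coeff i i x = sin x * (- sin x) ^ i"
  by (induction i arbitrary: x) (simp_all add: chain_coeff_eq_0)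

lemma higher_deriv_sin_mult_poly_cos:
  "(deriv ^^ i) (\<lambda>t. sin t * poly p (cos t)) =
     (\<lambda>x. \<Sum>l\<le>i. chain_coeff i l x * poly ((pderiv ^^ l) p) (cos x))"
proof (induction i)
  case 0
  show ?case by simp
next
  case (Suc i)
  define P where "P l x = poly ((pderiv ^^ l) p) (cos x)" for l x
  have DERIV_P: "DERIV (P l) x :> - (P (Suc l) x * sin x)" for l x
    unfolding P_def by (auto intro!: derivative_eq_intros)
  show ?case
  proof
    fix x
    let ?a = "chain_coeff i"
    have "(deriv ^^ Suc i) (\<lambda>t. sin t * poly p (cos t)) x = deriv (\<lambda>x. \<Sum>l\<le>i. ?a l x * P l x) x"
      using Suc by (simp add: P_def)
    also have "\<dots> = (\<Sum>l\<le>i. deriv (?a l) x * P l x) - (\<Sum>l\<le>i. ?a l x * P (Suc l) x * sin x)"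
      by (rule DERIV_imp_deriv)
         (auto intro!: derivative_eq_intros DERIV_trig_polys chain_coeff_in_trig_polys DERIV_P
               simp: sum_subtractf algebra_simps)
    also have "(\<Sum>l\<le>i. deriv (?a l) x * P l x) = (\<Sum>l\<le>Suc i. deriv (?a l) x * P l x)"
      by (simp add: chain_coeff_eq_0)
    also have "\<dots> - (\<Sum>l\<le>i. ?a l x * P (Suc l) x * sin x) = (\<Sum>l\<le>Suc i. chain_coeff (Suc i) l x * P l x)"
      by (simp add: sum.atMost_Suc_shift sum_subtractf algebra_simps del: sum.atMost_Suc)
    finally show "(deriv ^^ Suc i) (\<lambda>t. sin t * poly p (cos t)) x =
        (\<Sum>l\<le>Suc i. chain_coeff (Suc i) l x * poly ((pderiv ^^ l) p) (cos x))"
      by (simp add: P_def)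
  qed
qed

fun chebyshev_U :: "nat \<Rightarrow> real poly" where
  "chebyshev_U 0 = 1"
| "chebyshev_U (Suc 0) = [:0, 2:]"
| "chebyshev_U (Suc (Suc k)) = [:0, 2:] * chebyshev_U (Suc k) - chebyshev_U k"

lemma sin_Suc_mult_eq_chebyshev_U: "sin (real (Suc k) * t) = sin t * poly (chebyshev_U k) (cos t)"
proof (induction k rule: chebyshev_U.induct)
  case 1
  show ?case by simp
next
  case 2
  show ?case by (simp add: sin_double)
next
  case (3 k)
  have "sin (real (Suc (Suc (Suc k))) * t) = 2 * cos t * sin (real (Suc (Suc k)) * t) - sin (real (Suc k) * t)"
    using sin_add[of "real (Suc (Suc k)) * t" t] sin_diff[of "real (Suc (Suc k)) * t" t]
    by (simp add: algebra_simps)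
  with 3 show ?case by (simp add: algebra_simps)
qed

lemma coeff_chebyshev_U:
  "coeff (chebyshev_U k) k = 2 ^ k \<and> (\<forall>m>k. coeff (chebyshev_U k) m = 0)
     \<and> (\<forall>m. odd (k + m) \<longrightarrow> coeff (chebyshev_U k) m = 0)"
proof (induction k rule: chebyshev_U.induct)
  case 1
  show ?case by (auto simp: coeff_1 elim: oddE)
next
  case 2
  show ?case by (auto simp: coeff_pCons split: nat.splits)
next
  case (3 k)
  have "coeff (chebyshev_U (Suc (Suc k))) m =
      (case m of 0 \<Rightarrow> 0 | Suc m' \<Rightarrow> 2 * coeff (chebyshev_U (Suc k)) m') - coeff (chebyshev_U k) m" for m
    by (simp add: coeff_pCons split: nat.split)
  with 3 show ?case by (auto split: nat.splits)
qed

lemma higher_pderiv_monom_1: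
  "(pderiv ^^ l) (monom (1::'a::field_char_0) k) =
     (if l \<le> k then monom (fact k / fact (k - l)) (k - l) else 0)"
proof (induction l)
  case 0
  show ?case by simp
next
  case (Suc l)
  show ?case
  proof (cases "Suc l \<le> k")
    case True
    then have "k - l = Suc (k - Suc l)"
      by simp
    then have "fact (k - l) = of_nat (k - l) * (fact (k - Suc l) :: 'a)"
      by (metis fact_Suc)
    with True Suc show ?thesis
      by (simp add: pderiv_monom field_simps)
  next
    case False
    with Suc show ?thesis by (auto simp: pderiv_monom)
  qed
qed

lemma sum_monom_coeff_support:
  assumes "finite S" "\<And>k. coeff p k \<noteq> 0 \<Longrightarrow> k \<in> S"
  shows "(\<Sum>k\<in>S. monom (coeff p k) k) = p"
  by (rule poly_eqI) (use assms in \<open>auto simp: coeff_sum coeff_monom\<close>)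

lemma higher_deriv_mat_factor:
  "mat n n (\<lambda>(i, j). (deriv ^^ i) (\<lambda>t. sin t * poly (q j) (cos t)) x) =
     mat n n (\<lambda>(i, l). chain_coeff i l x) * mat n n (\<lambda>(l, j). poly ((pderiv ^^ l) (q j)) (cos x))"
  (is "?W = ?A * ?P")
proof (rule eq_matI)
  fix i j
  assume "i < dim_row (?A * ?P)" and "j < dim_col (?A * ?P)"
  then have i: "i < n" and j: "j < n" by auto
  have "(deriv ^^ i) (\<lambda>t. sin t * poly (q j) (cos t)) x =
      (\<Sum>l\<le>i. chain_coeff i l x * poly ((pderiv ^^ l) (q j)) (cos x))"
    by (simp add: higher_deriv_sin_mult_poly_cos)
  also have "\<dots> = (\<Sum>l<n. chain_coeff i l x * poly ((pderiv ^^ l) (q j)) (cos x))"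
    by (rule sum.mono_neutral_left) (use i in \<open>auto simp: chain_coeff_eq_0\<close>)
  finally show "?W $$ (i, j) = (?A * ?P) $$ (i, j)"
    using i j by (simp add: scalar_prod_def atLeast0LessThan)
qed auto

lemma det_chain_coeff_mat:
  "det (mat n n (\<lambda>(i, l). chain_coeff i l x)) = (\<Prod>i<n. sin x * (- sin x) ^ i)"
  by (subst det_lower_triangular[of n])
     (auto simp: chain_coeff_eq_0 chain_coeff_diag prod_list_diag_prod atLeast0LessThan)

lemma pderiv_mat_factor:
  fixes q :: "nat \<Rightarrow> 'a::idom poly"
  assumes inj: "inj_on e {..<n}"
    and supp: "\<And>j k. j < n \<Longrightarrow> coeff (q j) k \<noteq> 0 \<Longrightarrow> k \<in> e ` {..<n}"
  shows "mat n n (\<lambda>(l, j). poly ((pderiv ^^ l) (q j)) c) =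
    mat n n (\<lambda>(l, m). poly ((pderiv ^^ l) (monom 1 (e m))) c) * mat n n (\<lambda>(m, j). coeff (q j) (e m))"
  (is "?P = ?E * ?C")
proof (rule eq_matI)
  fix l j
  assume "l < dim_row (?E * ?C)" and "j < dim_col (?E * ?C)"
  then have l: "l < n" and j: "j < n" by auto
  have "poly ((pderiv ^^ l) (q j)) c =
      poly ((pderiv ^^ l) (\<Sum>k\<in>e ` {..<n}. smult (coeff (q j) k) (monom 1 k))) c"
    using sum_monom_coeff_support[of "e ` {..<n}" "q j"] supp[OF j] by (simp add: smult_monom)
  also have "\<dots> = (\<Sum>k\<in>e ` {..<n}. coeff (q j) k * poly ((pderiv ^^ l) (monom 1 k)) c)"
    by (simp add: higher_pderiv_sum higher_pderiv_smult poly_sum)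
  also have "\<dots> = (\<Sum>m<n. coeff (q j) (e m) * poly ((pderiv ^^ l) (monom 1 (e m))) c)"
    by (simp add: sum.reindex[OF inj])
  finally show "?P $$ (l, j) = (?E * ?C) $$ (l, j)"
    using l j by (simp add: scalar_prod_def atLeast0LessThan mult.commute)
qed auto

lemma det_pderiv_monom_mat:
  fixes c :: "'a::field_char_0"
  assumes "n \<ge> 1" "N \<ge> n - 1"
  shows "det (mat n n (\<lambda>(l, m). poly ((pderiv ^^ l) (monom 1 (if m < n - 1 then m else N))) c)) =
    (\<Prod>m<n - 1. fact m) * (fact N / fact (N - (n - 1)) * c ^ (N - (n - 1)))"
proof -
  obtain k where n: "n = Suc k" using assms by (cases n) auto
  have "det (mat n n (\<lambda>(l, m). poly ((pderiv ^^ l) (monom 1 (if m < n - 1 then m else N))) c)) =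
      (\<Prod>m<Suc k. poly ((pderiv ^^ m) (monom 1 (if m < k then m else N))) c)"
    by (subst det_upper_triangular[of _ n])
       (auto simp: upper_triangular_def higher_pderiv_monom_1 prod_list_diag_prod atLeast0LessThan n)
  also have "\<dots> = (\<Prod>m<k. fact m) * (fact N / fact (N - k) * c ^ (N - k))"
    using assms by (simp add: n higher_pderiv_monom_1 poly_monom)
  finally show ?thesis by (simp add: n)
qed

definition wr_degree :: "nat \<Rightarrow> nat \<Rightarrow> nat" where
  "wr_degree n m = (if m < n - 1 then m else n)"

lemma chebyshev_U_support_wr_degree:
  assumes "n \<ge> 1" "j < n" "coeff (chebyshev_U (wr_degree n j)) k \<noteq> 0"
  shows "k \<in> wr_degree n ` {..<n}"
proof -
  have le: "k \<le> wr_degree n j" and even: "even (wr_degree n j + k)"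
    using assms(3) coeff_chebyshev_U[of "wr_degree n j"] by (auto simp: not_less[symmetric])
  have "k \<noteq> n - 1"
  proof
    assume k_eq: "k = n - 1"
    with le have "wr_degree n j = n"
      by (auto simp: wr_degree_def split: if_splits)
    with even k_eq assms(1) show False
      by presburger
  qed
  moreover have "k \<le> n"
    using le by (auto simp: wr_degree_def split: if_splits)
  ultimately consider "k < n - 1" | "k = n"
    by linarith
  then show ?thesis
  proof cases
    case 1
    then show ?thesis by (force simp: wr_degree_def)
  next
    case 2
    then have "k = wr_degree n (n - 1)" by (simp add: wr_degree_def)
    with assms(1) show ?thesis by simp
  qed
qed

lemma wronskian_sin_multiples:
  assumes "n \<ge> 1"
  shows "Wr (map (\<lambda>k t. sin (real k * t)) ([1..<n] @ [n + 1])) x =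
    (\<Prod>i<n. sin x * (- sin x) ^ i) * ((\<Prod>m<n - 1. fact m) * (fact n * cos x)) * ((\<Prod>m<n - 1. 2 ^ m) * 2 ^ n)"
proof -
  define q where "q j = chebyshev_U (wr_degree n j)" for j
  define A where "A = mat n n (\<lambda>(i, l). chain_coeff i l x)"
  define E where "E = mat n n (\<lambda>(l, m). poly ((pderiv ^^ l) (monom 1 (wr_degree n m))) (cos x))"
  define C where "C = mat n n (\<lambda>(m, j). coeff (q j) (wr_degree n m))"
  have carr: "A \<in> carrier_mat n n" "E \<in> carrier_mat n n" "C \<in> carrier_mat n n"
    by (simp_all add: A_def E_def C_def)
  let ?fs = "map (\<lambda>k t. sin (real k * t)) ([1..<n] @ [n + 1])"
  have fs: "?fs ! j = (\<lambda>t. sin t * poly (q j) (cos t))" if "j < n" for j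
  proof -
    have "?fs ! j = (\<lambda>t. sin (real (Suc (wr_degree n j)) * t))"
      using that assms by (auto simp: wr_degree_def nth_append)
    then show ?thesis
      by (simp only: sin_Suc_mult_eq_chebyshev_U q_def)
  qed
  have inj: "inj_on (wr_degree n) {..<n}"
    by (auto simp: inj_on_def wr_degree_def)
  have supp: "k \<in> wr_degree n ` {..<n}" if "j < n" and "coeff (q j) k \<noteq> 0" for j k
    using chebyshev_U_support_wr_degree[OF assms that[unfolded q_def]] .
  have "Wr ?fs x = det (mat n n (\<lambda>(i, j). (deriv ^^ i) (\<lambda>t. sin t * poly (q j) (cos t)) x))"
    unfolding Wr_def using assms fs by (intro arg_cong[where f = det] eq_matI) auto
  also have "\<dots> = det (A * (E * C))"
    by (simp add: A_def E_def C_def higher_deriv_mat_factor pderiv_mat_factor[OF inj supp])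
  also have "\<dots> = det A * (det E * det C)"
    using carr by (simp add: det_mult[of _ n])
  also have "det A = (\<Prod>i<n. sin x * (- sin x) ^ i)"
    by (simp add: A_def det_chain_coeff_mat)
  also have "det E = (\<Prod>m<n - 1. fact m) * (fact n * cos x)"
    using det_pderiv_monom_mat[of n n "cos x"] assms by (simp add: E_def wr_degree_def)
  also have "det C = (\<Prod>j<n. 2 ^ wr_degree n j)"
    by (subst det_upper_triangular[of _ n])
       (auto simp: C_def q_def wr_degree_def upper_triangular_def coeff_chebyshev_U prod_list_diag_prod atLeast0LessThan)
  also have "\<dots> = (\<Prod>m<n - 1. 2 ^ m) * 2 ^ n"
    using assms by (cases n) (auto simp: wr_degree_def)
  finally show ?thesis by simp
qed

lemma diagonal_product_closed_form:
  fixes s c :: real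
  assumes "n \<ge> 1"
  shows "(\<Prod>i<n. s * (- s) ^ i) * ((\<Prod>m<n - 1. fact m) * (fact n * c)) * ((\<Prod>m<n - 1. 2 ^ m) * 2 ^ n) =
    (-2) ^ (n * (n - 1) div 2) * s ^ (n * (n + 1) div 2) * barnesG_succ n * (2 * real n) * c"
proof -
  obtain k where n: "n = Suc k"
    using assms by (cases n) auto
  then have n_minus_1: "n - 1 = k"
    by simp
  define S where "S = (\<Sum>m<k. m)"
  have sum_n: "(\<Sum>i<n. i) = S + k"
    by (simp add: n S_def)
  have T: "n * (n - 1) div 2 = S + k"
    using Sum_Ico_nat[of 0 n] by (simp add: atLeast0LessThan sum_n)
  have "n * (n + 1) = n * (n - 1) + 2 * n"
    by (simp add: n algebra_simps)
  then have T': "n * (n + 1) div 2 = S + k + n"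
    using T by simp
  have "(\<Prod>i<n. s * (- s) ^ i) = s ^ n * (- s) ^ (S + k)"
    by (simp add: prod.distrib power_sum flip: sum_n)
  moreover have "(\<Prod>m<k. (2::real) ^ m) = 2 ^ S"
    by (simp add: S_def power_sum)
  moreover have "barnesG_succ n = (\<Prod>m<k. fact m) * fact k"
    by (simp add: barnesG_succ_def n)
  moreover have "fact n = real n * fact k"
    by (simp add: n)
  moreover have "(2::real) ^ n = 2 * 2 ^ k"
    by (simp add: n)
  ultimately show ?thesis
    unfolding T T' unfolding n_minus_1 by (simp add: power_add power_minus[of s] power_minus[of "2::real"] mult_ac)
qed

theorem lemma1:
  fixes n :: nat and x :: real
  assumes "n \<ge> 1"
  shows "W1 n x = (-2) ^ (n * (n - 1) div 2) * sin x ^ (n * (n + 1) div 2)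
                  * barnesG_succ n * (2 * real n) * cos x"
proof (cases "n = 1")
  case True
  then show ?thesis
    by (simp add: W1_def barnesG_succ_def sin_double)
next
  case False
  then have "W1 n x = Wr (map (\<lambda>k t. sin (real k * t)) ([1..<n] @ [n + 1])) x"
    by (simp add: W1_def)
  also have "\<dots> = (\<Prod>i<n. sin x * (- sin x) ^ i) * ((\<Prod>m<n - 1. fact m) * (fact n * cos x))
      * ((\<Prod>m<n - 1. 2 ^ m) * 2 ^ n)"
    using assms by (rule wronskian_sin_multiples)
  also have "\<dots> = (-2) ^ (n * (n - 1) div 2) * sin x ^ (n * (n + 1) div 2)
                  * barnesG_succ n * (2 * real n) * cos x"
    using assms by (rule diagonal_product_closed_form)
  finally show ?thesis .
qed
end
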